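(* Let $X$ and $Y$ be unit Fréchet random variables (distribution function $e^{-1/x}$, $x>0$) such that $\lambda:=\lim_{u\to\infty}\mathbb{P}(X>u\mid Y>u)=0$, and let $(X_i,Y_i)$, $i\ge1$, be i.i.d. copies of $(X,Y)$. Then, as $n\to\infty$, $q_n\to0$ almost surely and, for any fixed threshold $u>0$, $q_{u,n}\to0$ almost surely, where $$q_n=\frac{\max_{i\le n}\{Y_i/X_i\}+\max_{i\le n}\{X_i/Y_i\}-2}{\max_{i\le n}\{Y_i/X_i\}\max_{i\le n}\{X_i/Y_i\}-1},\qquad q_{u,n}=\frac{\max_{i\le n}\{(u+W_i)/(u+V_i)\}+\max_{i\le n}\{(u+V_i)/(u+W_i)\}-2}{\max_{i\le n}\{(u+W_i)/(u+V_i)\}\max_{i\le n}\{(u+V_i)/(u+W_i)\}-1},$$ with $W_i=(X_i-u)I_{\{X_i>u\}}$ and $V_i=(Y_i-u)I_{\{Y_i>u\}}$.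
   Context: The quantity $\lambda$ is the tail dependence index of $(X,Y)$; $X$ and $Y$ are called tail independent if $\lambda=0$. $q_n$ is the quotient correlation and $q_{u,n}$ the tail quotient correlation at threshold $u$; $W_i,V_i$ are the exceedances over $u$. *)

theory Defs
  imports "HOL-Probability.Probability"
begin

definition frechet_cdf :: "real \<Rightarrow> real" where
  "frechet_cdf x = (if x > 0 then exp (- 1 / x) else 0)"

definition quot_corr :: "(nat \<Rightarrow> real) \<Rightarrow> (nat \<Rightarrow> real) \<Rightarrow> nat \<Rightarrow> real" where
  "quot_corr x y n =
     (let a = Max ((\<lambda>i. y i / x i) ` {1..n});
          b = Max ((\<lambda>i. x i / y i) ` {1..n})
      in (a + b - 2) / (a * b - 1))"

definition exceed :: "real \<Rightarrow> real \<Rightarrow> real" where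
  "exceed u x = (if x > u then x - u else 0)"

definition tail_quot_corr :: "real \<Rightarrow> (nat \<Rightarrow> real) \<Rightarrow> (nat \<Rightarrow> real) \<Rightarrow> nat \<Rightarrow> real" where
  "tail_quot_corr u x y n =
     quot_corr (\<lambda>i. u + exceed u (y i)) (\<lambda>i. u + exceed u (x i)) n"

end

theory Submission imports Defs begin

text \<open>When both maxima in the quotient correlation are at least K \<ge> 2, the correlation lies
  in [0, 4/K], so it suffices that both maxima are unbounded. Tail independence gives, for every
  c and every level u, positive probability that one coordinate exceeds c times the larger of the
  other and u; by independence such an observation occurs almost surely among the i.i.d. copies,
  in both directions, which makes the maxima of the plain ratios and of the shifted exceedance
  ratios unbounded.\<close>

lemma quot_corr_formula_bound:
  fixes a b K :: real
  assumes "a \<ge> K" "b \<ge> K" "K \<ge> 2"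
  shows "\<bar>(a + b - 2) / (a * b - 1)\<bar> \<le> 4 / K"
proof -
  have a2: "a \<ge> 2" "b \<ge> 2" using assms by auto
  have ab: "a * b \<ge> 4" using mult_mono[OF a2] a2 by simp
  have nonneg: "(a + b - 2) / (a * b - 1) \<ge> 0" using a2 ab by simp
  have "(a + b - 2) / (a * b - 1) \<le> (a + b) / (a * b / 2)"
    using a2 ab by (intro frac_le) auto
  also have "\<dots> = 2 / b + 2 / a" using a2 by (simp add: field_simps)
  also have "\<dots> \<le> 2 / K + 2 / K" using assms by (intro add_mono divide_left_mono) auto
  finally show ?thesis using nonneg by (simp only: abs_of_nonneg)
qed

lemma quot_corr_tendsto_zero:
  fixes x y :: "nat \<Rightarrow> real"
  assumes yx: "\<And>K. \<exists>i\<ge>1. y i / x i > K" and xy: "\<And>K. \<exists>i\<ge>1. x i / y i > K"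
  shows "quot_corr x y \<longlonglongrightarrow> 0"
proof (rule LIMSEQ_I)
  fix r :: real assume r: "r > 0"
  define K where "K = max 2 (4 / r + 1)"
  obtain i where i: "i \<ge> 1" "y i / x i > K" using yx by blast
  obtain j where j: "j \<ge> 1" "x j / y j > K" using xy by blast
  have "4 / K < r"
  proof -
    have "K > 4 / r" unfolding K_def by simp
    then have "K * r > 4" using r by (simp add: field_simps)
    then show ?thesis using r by (simp add: K_def field_simps)
  qed
  moreover have "\<bar>quot_corr x y n\<bar> \<le> 4 / K" if n: "n \<ge> max i j" for n
  proof -
    define a where "a = Max ((\<lambda>i. y i / x i) ` {1..n})"
    define b where "b = Max ((\<lambda>i. x i / y i) ` {1..n})"
    have "a \<ge> y i / x i" unfolding a_def using i n by (intro Max_ge) auto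
    moreover have "b \<ge> x j / y j" unfolding b_def using j n by (intro Max_ge) auto
    ultimately have "\<bar>(a + b - 2) / (a * b - 1)\<bar> \<le> 4 / K"
      using i j by (intro quot_corr_formula_bound) (auto simp: K_def)
    then show ?thesis unfolding quot_corr_def Let_def a_def b_def .
  qed
  ultimately show "\<exists>n0. \<forall>n\<ge>n0. norm (quot_corr x y n - 0) < r"
    by (intro exI[of _ "max i j"]) (auto intro: le_less_trans)
qed

lemma AE_exists_iid_in:
  fixes Z :: "nat \<Rightarrow> 'a \<Rightarrow> 'b" and Z0 :: "'a \<Rightarrow> 'b"
  assumes "prob_space M"
    and Zm: "\<And>i. Z i \<in> measurable M N" and Z0m: "Z0 \<in> measurable M N"
    and indep: "prob_space.indep_vars M (\<lambda>_. N) Z {1..}"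
    and distr: "\<And>i. i \<ge> 1 \<Longrightarrow> distr M N (Z i) = distr M N Z0"
    and S: "S \<in> sets N" and pos: "measure M (Z0 -` S \<inter> space M) > 0"
  shows "AE \<omega> in M. \<exists>i\<ge>1. Z i \<omega> \<in> S"
proof -
  interpret prob_space M by fact
  define p where "p = prob (Z0 -` S \<inter> space M)"
  have Sc: "space N - S \<in> sets N" using S by auto
  have miss: "prob (Z i -` (space N - S) \<inter> space M) = 1 - p" if "i \<ge> 1" for i
  proof -
    have "prob (Z i -` (space N - S) \<inter> space M) = measure (distr M N Z0) (space N - S)"
      by (metis distr[OF that] measure_distr[OF Zm Sc])
    also have "\<dots> = prob (Z0 -` (space N - S) \<inter> space M)"
      using measure_distr[OF Z0m Sc] .
    also have "Z0 -` (space N - S) \<inter> space M = space M - (Z0 -` S \<inter> space M)"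
      using measurable_space[OF Z0m] by auto
    also have "prob (space M - (Z0 -` S \<inter> space M)) = 1 - p" unfolding p_def using Z0m S by (intro prob_compl) auto
    finally show ?thesis .
  qed
  have indep_sets: "indep_sets (\<lambda>i. {Z i -` A \<inter> space M | A. A \<in> sets N}) {1..}"
    using indep unfolding indep_vars_def2 by auto
  define E where "E = (\<Inter>i\<in>{1..}. Z i -` (space N - S) \<inter> space M)"
  have E: "E \<in> events" unfolding E_def using Zm Sc by (intro sets.countable_INT') auto
  have "prob E \<le> (1 - p) ^ n" for n
  proof (cases "n = 0")
    case False
    have "prob E \<le> prob (\<Inter>j\<in>{1..n}. Z j -` (space N - S) \<inter> space M)"
      using E Zm Sc False unfolding E_def by (intro finite_measure_mono) auto
    also have "\<dots> = (\<Prod>j\<in>{1..n}. prob (Z j -` (space N - S) \<inter> space M))"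
      using False Sc by (intro indep_setsD[OF indep_sets]) auto
    also have "\<dots> = (1 - p) ^ n" using miss by simp
    finally show ?thesis .
  qed simp
  moreover have "(\<lambda>n. (1 - p) ^ n) \<longlonglongrightarrow> 0"
    using pos prob_le_1[of "Z0 -` S \<inter> space M"] unfolding p_def[symmetric]
    by (intro LIMSEQ_power_zero) auto
  ultimately have "prob E \<le> 0" by (intro LIMSEQ_le_const) auto
  then have "E \<in> null_sets M"
    using E measure_nonneg[of M E] by (simp add: emeasure_eq_measure null_sets_def)
  then show ?thesis
    by (rule AE_I') (auto simp: E_def intro: measurable_space[OF Zm])
qed

lemma frechet_survival:
  assumes "prob_space M" "A \<in> borel_measurable M"
    and "\<And>x. measure M {\<omega> \<in> space M. A \<omega> \<le> x} = frechet_cdf x"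
  shows "measure M {\<omega> \<in> space M. s < A \<omega>} = 1 - frechet_cdf s"
proof -
  interpret prob_space M by fact
  have "{\<omega> \<in> space M. s < A \<omega>} = space M - {\<omega> \<in> space M. A \<omega> \<le> s}" by auto
  moreover have "{\<omega> \<in> space M. A \<omega> \<le> s} \<in> events" using assms(2) by measurable
  ultimately show ?thesis using prob_compl assms(3) by simp
qed

lemma frechet_survival_bounds:
  assumes "t > 0"
  shows "1 / (t + 1) \<le> 1 - frechet_cdf t" and "1 - frechet_cdf t \<le> 1 / t"
proof -
  have "exp (1 / t) \<ge> 1 + 1 / t" by (rule exp_ge_add_one_self)
  then have "exp (- 1 / t) \<le> 1 / (1 + 1 / t)"
    using assms by (simp add: exp_minus field_simps)
  also have "\<dots> = 1 - 1 / (t + 1)" using assms by (simp add: field_simps)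
  finally show "1 / (t + 1) \<le> 1 - frechet_cdf t" using assms by (simp add: frechet_cdf_def)
  show "1 - frechet_cdf t \<le> 1 / t"
    using exp_ge_add_one_self[of "- 1 / t"] assms by (simp add: frechet_cdf_def)
qed

definition dominates :: "real \<Rightarrow> real \<Rightarrow> real \<Rightarrow> real \<Rightarrow> bool" where
  "dominates c u a b \<longleftrightarrow> 0 < b \<and> c * max b u < a"

lemma dominates_mono: "dominates c u a b \<Longrightarrow> c' \<le> c \<Longrightarrow> dominates c' u a b"
  unfolding dominates_def
  by (metis max.strict_coboundedI1 mult_right_mono order.strict_trans1 order_less_imp_le)

lemma dominates_imp_ratio_gt: "dominates c 0 a b \<Longrightarrow> a / b > c"
  by (auto simp: dominates_def pos_less_divide_eq max_def)

lemma dominates_imp_exceed_ratio_gt: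
  assumes "dominates c u a b" "c \<ge> 1" "u > 0"
  shows "(u + exceed u a) / (u + exceed u b) > c"
proof -
  have "u \<le> c * max b u" using assms mult_mono[of 1 c u "max b u"] by simp
  then have "u + exceed u a = a" using assms(1) by (simp add: dominates_def exceed_def)
  moreover have "u + exceed u b = max b u" by (simp add: exceed_def max_def)
  ultimately show ?thesis using assms by (simp add: dominates_def pos_less_divide_eq)
qed

lemma exceed_ratio_unbounded:
  assumes "\<forall>c. \<exists>i\<ge>1. dominates c u (a i) (b i)" and u: "u > 0"
  shows "\<exists>i\<ge>1. (u + exceed u (a i)) / (u + exceed u (b i)) > K"
proof -
  obtain i where "i \<ge> 1" "dominates (max K 1) u (a i) (b i)" using assms(1) by blast
  then show ?thesis
    using dominates_imp_exceed_ratio_gt[OF _ _ u, of "max K 1"] by force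
qed

text \<open>For c \<ge> 1 and t large, \<open>A > c t\<close> has probability at least 1/(2ct), while
  \<open>P(B > t) \<le> 1/t\<close>; if domination were null, \<open>A > c t\<close> would force \<open>B > t\<close>, so the
  tail ratio would stay above 1/(2c).\<close>

lemma prob_dominates_pos:
  assumes "prob_space M"
    and Am: "A \<in> borel_measurable M" and Bm: "B \<in> borel_measurable M"
    and FA: "\<And>x. measure M {\<omega> \<in> space M. A \<omega> \<le> x} = frechet_cdf x"
    and FB: "\<And>x. measure M {\<omega> \<in> space M. B \<omega> \<le> x} = frechet_cdf x"
    and tail: "((\<lambda>t. measure M {\<omega> \<in> space M. A \<omega> > t \<and> B \<omega> > t} / (1 - frechet_cdf t))
                 \<longlongrightarrow> 0) at_top"
    and c: "c \<ge> 1" and u: "u \<ge> 0"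
  shows "measure M {\<omega> \<in> space M. dominates c u (A \<omega>) (B \<omega>)} > 0"
proof (rule ccontr)
  interpret prob_space M by fact
  let ?N = "{\<omega> \<in> space M. dominates c u (A \<omega>) (B \<omega>)}"
  let ?J = "\<lambda>t. {\<omega> \<in> space M. A \<omega> > t \<and> B \<omega> > t}"
  let ?B0 = "{\<omega> \<in> space M. B \<omega> \<le> 0}"
  assume "\<not> ?thesis"
  then have N0: "prob ?N = 0" using measure_nonneg[of M ?N] by linarith
  have B0: "prob ?B0 = 0" using FB[of 0] by (simp add: frechet_cdf_def)
  have "eventually (\<lambda>t. prob (?J t) / (1 - frechet_cdf t) < 1 / (2 * c)) at_top"
    using tail c by (intro order_tendstoD) auto
  then obtain t0 where t0: "\<And>t. t \<ge> t0 \<Longrightarrow> prob (?J t) / (1 - frechet_cdf t) < 1 / (2 * c)"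
    by (auto simp: eventually_at_top_linorder)
  define t where "t = max t0 (max u 1)"
  have t: "t \<ge> t0" "t \<ge> u" "t \<ge> 1" unfolding t_def by auto
  have ct: "c * t \<ge> t" using c t mult_right_mono[of 1 c t] by simp
  have evs: "?J t \<in> events" "?N \<in> events" "?B0 \<in> events"
    using Am Bm unfolding dominates_def by measurable
  have "{\<omega> \<in> space M. c * t < A \<omega>} \<subseteq> ?J t \<union> (?N \<union> ?B0)"
  proof safe
    fix \<omega> assume \<omega>: "\<omega> \<in> space M" "c * t < A \<omega>" "\<not> dominates c u (A \<omega>) (B \<omega>)" "\<not> B \<omega> \<le> 0"
    then have "c * t < c * max (B \<omega>) u" by (auto simp: dominates_def)
    then have "B \<omega> > t" using c t by (simp add: mult_less_cancel_left)
    then show "A \<omega> > t" "B \<omega> > t" using \<omega> ct by auto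
  qed
  then have "prob {\<omega> \<in> space M. c * t < A \<omega>} \<le> prob (?J t \<union> (?N \<union> ?B0))"
    using evs by (intro finite_measure_mono) auto
  also have "\<dots> \<le> prob (?J t) + (prob ?N + prob ?B0)"
    using evs by (intro order.trans[OF measure_subadditive] add_left_mono measure_subadditive) auto
  finally have m: "1 / (c * t + 1) \<le> prob (?J t)"
    using frechet_survival_bounds(1)[of "c * t"] frechet_survival[OF assms(1) Am FA] N0 B0 ct t
    by simp
  have surv_pos: "0 < 1 - frechet_cdf t"
    using frechet_survival_bounds(1)[of t] t by (smt (verit) divide_pos_pos)
  have surv_t: "t \<le> 1 / (1 - frechet_cdf t)"
    using frechet_survival_bounds(2)[of t] surv_pos t by (simp add: le_divide_eq mult.commute)
  have "1 / (2 * c) \<le> t / (c * t + 1)"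
    using c t mult_mono[of 1 c 1 t] by (simp add: divide_simps)
  also have "\<dots> = 1 / (c * t + 1) * t" by simp
  also have "\<dots> \<le> prob (?J t) * t" using m t by (intro mult_right_mono) auto
  also have "\<dots> \<le> prob (?J t) * (1 / (1 - frechet_cdf t))"
    using surv_t by (intro mult_left_mono) auto
  finally have "1 / (2 * c) \<le> prob (?J t) / (1 - frechet_cdf t)" by simp
  with t0[OF t(1)] show False by simp
qed

lemma AE_mutual_domination:
  fixes M :: "'a measure" and X Y :: "'a \<Rightarrow> real" and Xs Ys :: "nat \<Rightarrow> 'a \<Rightarrow> real"
  assumes u: "u \<ge> 0" and "prob_space M"
    and Xm: "X \<in> borel_measurable M" and Ym: "Y \<in> borel_measurable M"
    and "\<And>i. Xs i \<in> borel_measurable M" and "\<And>i. Ys i \<in> borel_measurable M"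
    and FX: "\<And>x. measure M {\<omega> \<in> space M. X \<omega> \<le> x} = frechet_cdf x"
    and FY: "\<And>x. measure M {\<omega> \<in> space M. Y \<omega> \<le> x} = frechet_cdf x"
    and tail: "((\<lambda>t. measure M {\<omega> \<in> space M. X \<omega> > t \<and> Y \<omega> > t}
                / measure M {\<omega> \<in> space M. Y \<omega> > t}) \<longlongrightarrow> 0) at_top"
    and indep: "prob_space.indep_vars M (\<lambda>_. borel) (\<lambda>i \<omega>. (Xs i \<omega>, Ys i \<omega>)) {1..}"
    and distr: "\<And>i. i \<ge> 1 \<Longrightarrow>
      distr M borel (\<lambda>\<omega>. (Xs i \<omega>, Ys i \<omega>)) = distr M borel (\<lambda>\<omega>. (X \<omega>, Y \<omega>))"
  shows "AE \<omega> in M. \<forall>c. (\<exists>i\<ge>1. dominates c u (Xs i \<omega>) (Ys i \<omega>))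
                       \<and> (\<exists>i\<ge>1. dominates c u (Ys i \<omega>) (Xs i \<omega>))"
proof -
  interpret prob_space M by fact
  have tail_XY: "((\<lambda>t. prob {\<omega> \<in> space M. X \<omega> > t \<and> Y \<omega> > t} / (1 - frechet_cdf t))
                   \<longlongrightarrow> 0) at_top"
    using tail by (simp add: frechet_survival[OF assms(2) Ym FY])
  then have tail_YX: "((\<lambda>t. prob {\<omega> \<in> space M. Y \<omega> > t \<and> X \<omega> > t} / (1 - frechet_cdf t))
                   \<longlongrightarrow> 0) at_top"
    by (simp add: conj_commute)
  define D where "D c = {p :: real \<times> real. dominates c u (fst p) (snd p)}" for c
  define D' where "D' c = {p :: real \<times> real. dominates c u (snd p) (fst p)}" for c
  have D_sets: "D c \<in> sets borel" "D' c \<in> sets borel" for c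
  proof -
    have "Measurable.pred (borel \<Otimes>\<^sub>M borel) (\<lambda>p::real \<times> real. dominates c u (fst p) (snd p))"
         "Measurable.pred (borel \<Otimes>\<^sub>M borel) (\<lambda>p::real \<times> real. dominates c u (snd p) (fst p))"
      unfolding dominates_def by measurable
    then show "D c \<in> sets borel" "D' c \<in> sets borel"
      unfolding D_def D'_def pred_def borel_prod by simp_all
  qed
  have preimage_D: "(\<lambda>\<omega>. (X \<omega>, Y \<omega>)) -` D c \<inter> space M = {\<omega> \<in> space M. dominates c u (X \<omega>) (Y \<omega>)}"
    "(\<lambda>\<omega>. (X \<omega>, Y \<omega>)) -` D' c \<inter> space M = {\<omega> \<in> space M. dominates c u (Y \<omega>) (X \<omega>)}" for c
    by (auto simp: D_def D'_def)
  have hit: "AE \<omega> in M. \<forall>k::nat. (\<exists>i\<ge>1. (Xs i \<omega>, Ys i \<omega>) \<in> D (real k + 1))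
                                \<and> (\<exists>i\<ge>1. (Xs i \<omega>, Ys i \<omega>) \<in> D' (real k + 1))"
  proof (subst AE_all_countable, intro allI AE_conjI)
    fix k :: nat
    have c: "real k + 1 \<ge> 1" by simp
    show "AE \<omega> in M. \<exists>i\<ge>1. (Xs i \<omega>, Ys i \<omega>) \<in> D (real k + 1)"
      using prob_dominates_pos[OF assms(2) Xm Ym FX FY tail_XY c u] assms(2,5,6) Xm Ym
      by (intro AE_exists_iid_in[OF _ _ _ indep distr D_sets(1)]) (simp_all add: preimage_D)
    show "AE \<omega> in M. \<exists>i\<ge>1. (Xs i \<omega>, Ys i \<omega>) \<in> D' (real k + 1)"
      using prob_dominates_pos[OF assms(2) Ym Xm FY FX tail_YX c u] assms(2,5,6) Xm Ym
      by (intro AE_exists_iid_in[OF _ _ _ indep distr D_sets(2)]) (simp_all add: preimage_D)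
  qed
  then show ?thesis
  proof eventually_elim
    case (elim \<omega>)
    show ?case
    proof
      fix c :: real
      obtain k :: nat where "c \<le> real k + 1" using real_arch_simple[of c] by (metis add_increasing2 zero_le_one)
      then show "(\<exists>i\<ge>1. dominates c u (Xs i \<omega>) (Ys i \<omega>)) \<and> (\<exists>i\<ge>1. dominates c u (Ys i \<omega>) (Xs i \<omega>))"
        using elim[rule_format, of k] by (auto simp: D_def D'_def intro: dominates_mono)
    qed
  qed
qed

theorem theorem5p1:
  fixes M :: "'a measure" and X Y :: "'a \<Rightarrow> real" and Xs Ys :: "nat \<Rightarrow> 'a \<Rightarrow> real"
  assumes "prob_space M"
    and "X \<in> borel_measurable M" and "Y \<in> borel_measurable M"
    and "\<And>i. Xs i \<in> borel_measurable M" and "\<And>i. Ys i \<in> borel_measurable M"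
    and "\<And>x. measure M {\<omega> \<in> space M. X \<omega> \<le> x} = frechet_cdf x"
    and "\<And>x. measure M {\<omega> \<in> space M. Y \<omega> \<le> x} = frechet_cdf x"
    and "((\<lambda>u. measure M {\<omega> \<in> space M. X \<omega> > u \<and> Y \<omega> > u}
                / measure M {\<omega> \<in> space M. Y \<omega> > u}) \<longlongrightarrow> 0) at_top"
    and "prob_space.indep_vars M (\<lambda>_. borel) (\<lambda>i \<omega>. (Xs i \<omega>, Ys i \<omega>)) {1..}"
    and "\<And>i. i \<ge> 1 \<Longrightarrow> distr M borel (\<lambda>\<omega>. (Xs i \<omega>, Ys i \<omega>)) = distr M borel (\<lambda>\<omega>. (X \<omega>, Y \<omega>))"
  shows "(AE \<omega> in M. (\<lambda>n. quot_corr (\<lambda>i. Xs i \<omega>) (\<lambda>i. Ys i \<omega>) n) \<longlonglongrightarrow> 0)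
    \<and> (\<forall>u>0. AE \<omega> in M. (\<lambda>n. tail_quot_corr u (\<lambda>i. Xs i \<omega>) (\<lambda>i. Ys i \<omega>) n) \<longlonglongrightarrow> 0)"
proof -
  have domination: "AE \<omega> in M. \<forall>c. (\<exists>i\<ge>1. dominates c u (Xs i \<omega>) (Ys i \<omega>))
                                     \<and> (\<exists>i\<ge>1. dominates c u (Ys i \<omega>) (Xs i \<omega>))"
    if "u \<ge> 0" for u
    using AE_mutual_domination[OF that assms] by blast
  have "AE \<omega> in M. (\<lambda>n. quot_corr (\<lambda>i. Xs i \<omega>) (\<lambda>i. Ys i \<omega>) n) \<longlonglongrightarrow> 0"
    using domination[OF order_refl]
  proof eventually_elim
    case (elim \<omega>)
    then show ?case by (intro quot_corr_tendsto_zero) (meson dominates_imp_ratio_gt)+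
  qed
  moreover have "AE \<omega> in M. (\<lambda>n. tail_quot_corr u (\<lambda>i. Xs i \<omega>) (\<lambda>i. Ys i \<omega>) n) \<longlonglongrightarrow> 0"
    if u: "u > 0" for u
    using domination[OF less_imp_le[OF u]]
  proof eventually_elim
    case (elim \<omega>)
    then show ?case unfolding tail_quot_corr_def
      using u by (intro quot_corr_tendsto_zero exceed_ratio_unbounded) auto
  qed
  ultimately show ?thesis by blast
qed

end
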